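(* Let $m\ge 2$, $n\ge 1$, and let $\overrightarrow{K_{1,n}}$ be any orientation of the star $K_{1,n}$. Then the oriented star forest $m\overrightarrow{K_{1,n}}$, the disjoint union of $m$ copies of $\overrightarrow{K_{1,n}}$, is both $\{0\}$-antimagic and $\{0,1\}$-antimagic.
   Context: In an oriented graph $\overrightarrow{G}$, $d(u,v)$ is the length of a shortest directed path from $u$ to $v$ ($d(u,u)=0$, $d(u,v)=\infty$ if there is none). Let $\partial=\max\{d(u,v)<\infty : u,v\in V(\overrightarrow{G})\}$. A distance set is a nonempty $D\subseteq\{0,1,\dots,\partial\}$. The $D$-neighborhood of $u$ is $N_D(u)=\{v : d(u,v)\in D\}$. For a bijection $f:V(\overrightarrow{G})\to\{1,\dots,|V(\overrightarrow{G})|\}$, the $D$-weight of $u$ is $\omega_D(u)=\sum_{v\in N_D(u)} f(v)$. $\overrightarrow{G}$ is $D$-antimagic if $D\subseteq\{0,\dots,\partial\}$ and there is such a bijection $f$ with all $D$-weights pairwise distinct. *)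

theory Defs
  imports Main "HOL-Library.Extended_Nat"
begin

definition oriented_graph :: "'a set \<Rightarrow> ('a \<times> 'a) set \<Rightarrow> bool" where
  "oriented_graph V A \<longleftrightarrow> finite V \<and> A \<subseteq> V \<times> V \<and>
     (\<forall>u v. (u, v) \<in> A \<longrightarrow> (v, u) \<notin> A) \<and> (\<forall>u. (u, u) \<notin> A)"

definition odist :: "('a \<times> 'a) set \<Rightarrow> 'a \<Rightarrow> 'a \<Rightarrow> enat" where
  "odist A u v = (if \<exists>k. (u, v) \<in> A ^^ k then enat (LEAST k. (u, v) \<in> A ^^ k) else \<infinity>)"

definition odiam :: "'a set \<Rightarrow> ('a \<times> 'a) set \<Rightarrow> nat" where
  "odiam V A = Max {k. \<exists>u\<in>V. \<exists>v\<in>V. odist A u v = enat k}"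

definition D_nbhd :: "'a set \<Rightarrow> ('a \<times> 'a) set \<Rightarrow> nat set \<Rightarrow> 'a \<Rightarrow> 'a set" where
  "D_nbhd V A D u = {v \<in> V. \<exists>k\<in>D. odist A u v = enat k}"

definition D_weight :: "'a set \<Rightarrow> ('a \<times> 'a) set \<Rightarrow> nat set \<Rightarrow> ('a \<Rightarrow> nat) \<Rightarrow> 'a \<Rightarrow> nat" where
  "D_weight V A D f u = (\<Sum>v\<in>D_nbhd V A D u. f v)"

definition D_antimagic :: "'a set \<Rightarrow> ('a \<times> 'a) set \<Rightarrow> nat set \<Rightarrow> bool" where
  "D_antimagic V A D \<longleftrightarrow> D \<noteq> {} \<and> D \<subseteq> {0..odiam V A} \<and>
     (\<exists>f. bij_betw f V {1..card V} \<and> inj_on (D_weight V A D f) V)"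

text \<open>The oriented star forest m K_{1,n}: copy j < m has centre (j,0) and leaves
  (j,i), 1 \<le> i \<le> n.  All copies carry the
  same orientation.\<close>
definition star_forest_V :: "nat \<Rightarrow> nat \<Rightarrow> (nat \<times> nat) set" where
  "star_forest_V m n = {..<m} \<times> {0..n}"

definition star_forest_A :: "nat \<Rightarrow> nat \<Rightarrow> (nat \<Rightarrow> bool) \<Rightarrow> ((nat \<times> nat) \<times> (nat \<times> nat)) set" where
  "star_forest_A m n ori =
     {((j, 0), (j, i)) | j i. j < m \<and> 1 \<le> i \<and> i \<le> n \<and> ori i} \<union>
     {((j, i), (j, 0)) | j i. j < m \<and> 1 \<le> i \<and> i \<le> n \<and> \<not> ori i}"

end

theory Submission
  imports Defs
begin

(* The {0}-weight of a vertex is its own label, so every bijective labeling is {0}-antimagic.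
   For {0,1}: permuting the leaves of every star so that the out-leaves come first is an
   isomorphism, and D-antimagicness is invariant under isomorphism.  With p out-leaves per
   star, lay the labels out in blocks, one per vertex class (centres, out-leaves, in-leaves),
   copy after copy inside a block.  Then the weights inside one class are mixed-radix numerals
   (copy, leaf), hence distinct, and different classes get disjoint ranges of weights.  The
   block order depends on whether p = 0, p = 1 or p >= 2; for p = 1 the weight of a centre
   interleaves with those of its in-leaves, taking the slot of its unique out-leaf. *)

lemma odist_eq_0_iff: "odist A u v = enat 0 \<longleftrightarrow> u = v"
proof
  assume dist: "odist A u v = enat 0"
  then have walk: "\<exists>k. (u, v) \<in> A ^^ k" unfolding odist_def by (auto split: if_splits)
  with dist have "(LEAST k. (u, v) \<in> A ^^ k) = 0" unfolding odist_def by auto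
  with LeastI_ex[OF walk] show "u = v" by simp
next
  assume "u = v"
  then show "odist A u v = enat 0"
    unfolding odist_def by (metis (mono_tags) Least_eq_0 pair_in_Id_conv relpow.simps(1))
qed

lemma odist_eq_1_iff: "odist A u v = enat 1 \<longleftrightarrow> u \<noteq> v \<and> (u, v) \<in> A"
proof
  assume dist: "odist A u v = enat 1"
  then have walk: "\<exists>k. (u, v) \<in> A ^^ k" unfolding odist_def by (auto split: if_splits)
  with dist have "(LEAST k. (u, v) \<in> A ^^ k) = 1" unfolding odist_def by auto
  with LeastI_ex[OF walk] have "(u, v) \<in> A" by simp
  moreover have "u \<noteq> v" using dist odist_eq_0_iff[of A u v] by auto
  ultimately show "u \<noteq> v \<and> (u, v) \<in> A" by simp
next
  assume arc: "u \<noteq> v \<and> (u, v) \<in> A"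
  have "(LEAST k. (u, v) \<in> A ^^ k) = 1"
  proof (rule Least_equality)
    show "(u, v) \<in> A ^^ 1" using arc by simp
    show "1 \<le> k" if "(u, v) \<in> A ^^ k" for k using arc that by (cases k) auto
  qed
  moreover have "(u, v) \<in> A ^^ 1" using arc by simp
  ultimately show "odist A u v = enat 1" unfolding odist_def by (metis one_enat_def)
qed

lemma D_nbhd_0: "u \<in> V \<Longrightarrow> D_nbhd V A {0} u = {u}"
  unfolding D_nbhd_def using odist_eq_0_iff[of A u] by (auto simp: zero_enat_def)

lemma D_nbhd_01: "u \<in> V \<Longrightarrow> D_nbhd V A {0, 1} u = insert u {v \<in> V. u \<noteq> v \<and> (u, v) \<in> A}"
  unfolding D_nbhd_def using odist_eq_0_iff[of A u] odist_eq_1_iff[of A u]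
  by (auto simp: zero_enat_def one_enat_def)

lemma odiam_ge_1:
  assumes "finite V" "u \<in> V" "v \<in> V" "u \<noteq> v" "(u, v) \<in> A"
  shows "1 \<le> odiam V A"
proof -
  let ?dists = "{k. \<exists>u\<in>V. \<exists>v\<in>V. odist A u v = enat k}"
  have "?dists \<subseteq> (\<lambda>(u, v). the_enat (odist A u v)) ` (V \<times> V)" by force
  then have "finite ?dists" using assms(1) by (meson finite_SigmaI finite_imageI finite_subset)
  moreover have "1 \<in> ?dists" using assms(2-5) odist_eq_1_iff[of A u v] by blast
  ultimately show ?thesis unfolding odiam_def by (simp add: Max_ge)
qed

lemma D_antimagic_0:
  assumes "finite V"
  shows "D_antimagic V A {0}"
proof -
  obtain f where f: "bij_betw f V {1..card V}"
    using finite_same_card_bij[OF assms, of "{1..card V}"] by auto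
  have "D_weight V A {0} f u = f u" if "u \<in> V" for u
    unfolding D_weight_def D_nbhd_0[OF that] by simp
  then have "inj_on (D_weight V A {0} f) V \<longleftrightarrow> inj_on f V"
    by (rule inj_on_cong)
  with f show ?thesis unfolding D_antimagic_def bij_betw_def by auto
qed

definition digraph_iso :: "('a \<Rightarrow> 'b) \<Rightarrow> 'a set \<Rightarrow> ('a \<times> 'a) set \<Rightarrow> 'b set \<Rightarrow> ('b \<times> 'b) set \<Rightarrow> bool" where
  "digraph_iso h V A V' A' \<longleftrightarrow> bij_betw h V V' \<and> A \<subseteq> V \<times> V \<and> A' \<subseteq> V' \<times> V' \<and>
     (\<forall>u\<in>V. \<forall>v\<in>V. (h u, h v) \<in> A' \<longleftrightarrow> (u, v) \<in> A)"

lemma relpow_digraph_iso: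
  assumes iso: "digraph_iso h V A V' A'" and "u \<in> V" "v \<in> V"
  shows "(h u, h v) \<in> A' ^^ k \<longleftrightarrow> (u, v) \<in> A ^^ k"
  using \<open>v \<in> V\<close>
proof (induction k arbitrary: v)
  case 0
  then show ?case using iso \<open>u \<in> V\<close> by (auto simp: digraph_iso_def bij_betw_def inj_on_def)
next
  case (Suc k)
  have V': "V' = h ` V" and A': "A' \<subseteq> V' \<times> V'" and A: "A \<subseteq> V \<times> V"
    and arcs: "\<forall>x\<in>V. \<forall>y\<in>V. (h x, h y) \<in> A' \<longleftrightarrow> (x, y) \<in> A"
    using iso by (auto simp: digraph_iso_def bij_betw_def)
  have "(h u, h v) \<in> A' ^^ Suc k \<longleftrightarrow> (\<exists>y\<in>V'. (h u, y) \<in> A' ^^ k \<and> (y, h v) \<in> A')"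
    using A' by auto
  also have "\<dots> \<longleftrightarrow> (\<exists>y\<in>V. (h u, h y) \<in> A' ^^ k \<and> (h y, h v) \<in> A')"
    unfolding V' by blast
  also have "\<dots> \<longleftrightarrow> (\<exists>y\<in>V. (u, y) \<in> A ^^ k \<and> (y, v) \<in> A)"
    using Suc arcs by auto
  also have "\<dots> \<longleftrightarrow> (u, v) \<in> A ^^ Suc k"
    using A by auto
  finally show ?case .
qed

lemma odist_digraph_iso:
  "digraph_iso h V A V' A' \<Longrightarrow> u \<in> V \<Longrightarrow> v \<in> V \<Longrightarrow> odist A' (h u) (h v) = odist A u v"
  unfolding odist_def by (simp add: relpow_digraph_iso)

lemma odiam_digraph_iso:
  assumes iso: "digraph_iso h V A V' A'"
  shows "odiam V' A' = odiam V A"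
proof -
  have V': "V' = h ` V" using iso by (simp add: digraph_iso_def bij_betw_def)
  have "{k. \<exists>u\<in>V'. \<exists>v\<in>V'. odist A' u v = enat k} = {k. \<exists>u\<in>V. \<exists>v\<in>V. odist A u v = enat k}"
    unfolding V' using odist_digraph_iso[OF iso] by auto
  then show ?thesis unfolding odiam_def by simp
qed

lemma D_nbhd_digraph_iso:
  assumes iso: "digraph_iso h V A V' A'" and "u \<in> V"
  shows "D_nbhd V' A' D (h u) = h ` D_nbhd V A D u"
proof -
  have V': "V' = h ` V" using iso by (simp add: digraph_iso_def bij_betw_def)
  show ?thesis
    unfolding D_nbhd_def V' using odist_digraph_iso[OF iso \<open>u \<in> V\<close>] by auto
qed

lemma D_weight_digraph_iso:
  assumes iso: "digraph_iso h V A V' A'" and "u \<in> V"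
  shows "D_weight V' A' D f (h u) = D_weight V A D (f \<circ> h) u"
proof -
  have "inj_on h (D_nbhd V A D u)"
    using iso by (auto simp: digraph_iso_def bij_betw_def D_nbhd_def intro: inj_on_subset)
  then show ?thesis unfolding D_weight_def D_nbhd_digraph_iso[OF assms] by (rule sum.reindex)
qed

lemma D_antimagic_digraph_iso:
  assumes iso: "digraph_iso h V A V' A'" and "D_antimagic V' A' D"
  shows "D_antimagic V A D"
proof -
  obtain f where f: "bij_betw f V' {1..card V'}" and inj: "inj_on (D_weight V' A' D f) V'"
    and D: "D \<noteq> {}" "D \<subseteq> {0..odiam V' A'}"
    using \<open>D_antimagic V' A' D\<close> unfolding D_antimagic_def by blast
  have h: "bij_betw h V V'" using iso by (simp add: digraph_iso_def)
  then have "bij_betw (f \<circ> h) V {1..card V}"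
    using bij_betw_trans[OF h f] bij_betw_same_card[OF h] by simp
  moreover have "inj_on (D_weight V A D (f \<circ> h)) V"
  proof -
    have "inj_on (D_weight V' A' D f \<circ> h) V"
      using h inj by (auto simp: bij_betw_def intro: comp_inj_on)
    moreover have "(D_weight V' A' D f \<circ> h) u = D_weight V A D (f \<circ> h) u" if "u \<in> V" for u
      using D_weight_digraph_iso[OF iso that] by simp
    ultimately show ?thesis using inj_on_cong by blast
  qed
  ultimately show ?thesis
    using D odiam_digraph_iso[OF iso] unfolding D_antimagic_def by auto
qed

lemma ex_permutation_to_front:
  obtains \<tau> where "bij_betw \<tau> {1..n} {1..n}"
    and "\<And>i. i \<in> {1..n} \<Longrightarrow> P i \<longleftrightarrow> \<tau> i \<le> card {i \<in> {1..n}. P i}"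
proof -
  define S where "S = {i \<in> {1..n}. P i}"
  define p where "p = card S"
  have S: "S \<subseteq> {1..n}" "finite S" by (auto simp: S_def)
  have "p \<le> n" unfolding p_def using card_mono[OF _ S(1)] by simp
  obtain \<sigma> where \<sigma>: "bij_betw \<sigma> S {1..p}"
    using finite_same_card_bij[OF S(2), of "{1..p}"] unfolding p_def by auto
  have "card ({1..n} - S) = card {p<..n}"
    using S by (simp add: card_Diff_subset p_def)
  then obtain \<rho> where \<rho>: "bij_betw \<rho> ({1..n} - S) {p<..n}"
    using finite_same_card_bij[of "{1..n} - S" "{p<..n}"] by auto
  define \<tau> where "\<tau> i = (if P i then \<sigma> i else \<rho> i)" for i
  have "bij_betw \<tau> (S \<union> ({1..n} - S)) ({1..p} \<union> {p<..n})"
  proof (rule bij_betw_combine)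
    show "bij_betw \<tau> S {1..p}"
      using \<sigma> by (rule bij_betw_cong[THEN iffD1, rotated]) (simp add: \<tau>_def S_def)
    show "bij_betw \<tau> ({1..n} - S) {p<..n}"
      using \<rho> by (rule bij_betw_cong[THEN iffD1, rotated]) (simp add: \<tau>_def S_def)
  qed auto
  moreover have "S \<union> ({1..n} - S) = {1..n}" "{1..p} \<union> {p<..n} = {1..n}"
    using S \<open>p \<le> n\<close> by auto
  ultimately have "bij_betw \<tau> {1..n} {1..n}" by simp
  moreover have "P i \<longleftrightarrow> \<tau> i \<le> p" if "i \<in> {1..n}" for i
  proof (cases "P i")
    case True
    then show ?thesis using \<sigma> that by (auto simp: \<tau>_def S_def bij_betw_def)
  next
    case False
    then have "\<rho> i \<in> {p<..n}" using \<rho> that by (auto simp: S_def bij_betw_def)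
    then show ?thesis using False by (simp add: \<tau>_def)
  qed
  ultimately show ?thesis using that unfolding S_def p_def by blast
qed

lemma bij_betw_mixed_radix:
  fixes a b c m :: nat
  shows "bij_betw (\<lambda>(j, k). c + j * b + (k - a)) ({..<m} \<times> {a..<a + b}) {c..<c + m * b}"
  (is "bij_betw ?f ?A ?B")
proof -
  have "inj_on ?f ?A"
  proof (rule inj_onI)
    fix x y assume "x \<in> ?A" "y \<in> ?A" "?f x = ?f y"
    moreover obtain j k j' k' where xy: "x = (j, k)" "y = (j', k')" by (cases x, cases y)
    moreover define d d' where "d = k - a" and "d' = k' - a"
    ultimately have "d < b" "d' < b" "k = a + d" "k' = a + d'" and eq: "j * b + d = j' * b + d'"
      by auto
    moreover have "(j * b + d) div b = j" "(j * b + d) mod b = d"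
      and "(j' * b + d') div b = j'" "(j' * b + d') mod b = d'"
      using \<open>d < b\<close> \<open>d' < b\<close> by simp_all
    ultimately show "x = y" unfolding xy by metis
  qed
  moreover have "?f ` ?A \<subseteq> ?B"
  proof (rule image_subsetI)
    fix x assume "x \<in> ?A"
    then obtain j k where x: "x = (j, k)" "j < m" "a \<le> k" "k < a + b" by auto
    then have "j * b + (k - a) < (j + 1) * b" "(j + 1) * b \<le> m * b"
      using mult_le_mono1[of "j + 1" m b] by auto
    then show "?f x \<in> ?B" unfolding x by auto
  qed
  moreover have "card (?f ` ?A) = card ?B"
    using \<open>inj_on ?f ?A\<close> by (simp add: card_image card_cartesian_product)
  ultimately show ?thesis
    unfolding bij_betw_def using card_subset_eq[of ?B "?f ` ?A"] by simp
qed

lemma inj_on_mixed_radix: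
  fixes a b c m :: nat
  assumes "S \<subseteq> {..<m} \<times> {a..<a + b}" and "\<And>j k. (j, k) \<in> S \<Longrightarrow> f (j, k) = c + j * b + (k - a)"
  shows "inj_on f S"
proof -
  have "inj_on (\<lambda>(j, k). c + j * b + (k - a)) S"
    using bij_betw_mixed_radix[of c b a m] assms(1)
    by (auto simp: bij_betw_def intro: inj_on_subset)
  moreover have "inj_on f S \<longleftrightarrow> inj_on (\<lambda>(j, k). c + j * b + (k - a)) S"
    by (rule inj_on_cong) (clarsimp simp: assms(2))
  ultimately show ?thesis by simp
qed

lemma inj_on_Un_less:
  fixes f :: "'a \<Rightarrow> 'b::order"
  assumes "inj_on f A" "inj_on f B" "\<And>x y. x \<in> A \<Longrightarrow> y \<in> B \<Longrightarrow> f x < f y"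
  shows "inj_on f (A \<union> B)"
proof -
  have "f x \<noteq> f y" if "x \<in> A" "y \<in> B" for x y
    using assms(3)[OF that] by simp
  then have "f ` A \<inter> f ` B = {}" by blast
  with assms(1,2) show ?thesis unfolding inj_on_Un by blast
qed

lemma star_forest_A_iff:
  "((j, i), (j', i')) \<in> star_forest_A m n ori \<longleftrightarrow>
     j' = j \<and> j < m \<and> (i = 0 \<and> i' \<in> {1..n} \<and> ori i' \<or> i' = 0 \<and> i \<in> {1..n} \<and> \<not> ori i)"
  by (auto simp: star_forest_A_def)

lemma star_forest_A_subset: "star_forest_A m n ori \<subseteq> star_forest_V m n \<times> star_forest_V m n"
  by (auto simp: star_forest_A_def star_forest_V_def)

lemma finite_star_forest_V: "finite (star_forest_V m n)"
  by (simp add: star_forest_V_def)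

lemma star_forest_sorted_iso:
  obtains h where "digraph_iso h (star_forest_V m n) (star_forest_A m n ori)
    (star_forest_V m n) (star_forest_A m n (\<lambda>k. k \<le> card {i \<in> {1..n}. ori i}))"
proof -
  define p where "p = card {i \<in> {1..n}. ori i}"
  obtain \<tau> where \<tau>: "bij_betw \<tau> {1..n} {1..n}" and ori: "\<And>i. i \<in> {1..n} \<Longrightarrow> ori i \<longleftrightarrow> \<tau> i \<le> p"
    using ex_permutation_to_front[of n ori] unfolding p_def by metis
  define \<tau>0 where "\<tau>0 i = (if i = 0 then 0 else \<tau> i)" for i
  have "bij_betw \<tau>0 ({0} \<union> {1..n}) ({0} \<union> {1..n})"
  proof (rule bij_betw_combine)
    show "bij_betw \<tau>0 {0} {0}" by (simp add: \<tau>0_def)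
    show "bij_betw \<tau>0 {1..n} {1..n}"
      using \<tau> by (rule bij_betw_cong[THEN iffD1, rotated]) (simp add: \<tau>0_def)
  qed auto
  moreover have "{0} \<union> {1..n} = {0..n}" by auto
  ultimately have "bij_betw \<tau>0 {0..n} {0..n}" by simp
  then have bij: "bij_betw (map_prod id \<tau>0) (star_forest_V m n) (star_forest_V m n)"
    unfolding star_forest_V_def by (rule bij_betw_map_prod[OF bij_betw_id])
  have \<tau>_leaf: "\<tau> i \<in> {1..n}" if "i \<in> {1..n}" for i
    using \<tau> that by (auto simp: bij_betw_def)
  have \<tau>0_zero: "\<tau>0 i = 0 \<longleftrightarrow> i = 0" and \<tau>0_leaf: "\<tau>0 i \<in> {1..n} \<longleftrightarrow> i \<in> {1..n}"
    if "i \<le> n" for i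
    using \<tau>_leaf[of i] that by (auto simp: \<tau>0_def)
  have "(map_prod id \<tau>0 u, map_prod id \<tau>0 v) \<in> star_forest_A m n (\<lambda>k. k \<le> p)
      \<longleftrightarrow> (u, v) \<in> star_forest_A m n ori"
    if "u \<in> star_forest_V m n" "v \<in> star_forest_V m n" for u v
  proof -
    obtain j i j' i' where uv: "u = (j, i)" "v = (j', i')" by (cases u, cases v)
    moreover have "i \<le> n" "i' \<le> n" using that uv by (auto simp: star_forest_V_def)
    ultimately show ?thesis
      using \<tau>0_zero \<tau>0_leaf ori by (auto simp: star_forest_A_iff \<tau>0_def)
  qed
  with bij show ?thesis
    using that star_forest_A_subset unfolding digraph_iso_def p_def by blast
qed

definition star_weight :: "nat \<Rightarrow> (nat \<times> nat \<Rightarrow> nat) \<Rightarrow> nat \<times> nat \<Rightarrow> nat" where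
  "star_weight p F = (\<lambda>(j, k). if k = 0 then F (j, 0) + (\<Sum>l = 1..p. F (j, l))
     else if k \<le> p then F (j, k) else F (j, k) + F (j, 0))"

lemma D_weight_star_forest_sorted:
  assumes "p \<le> n" and u: "u \<in> star_forest_V m n"
  shows "D_weight (star_forest_V m n) (star_forest_A m n (\<lambda>k. k \<le> p)) {0, 1} F u =
    star_weight p F u"
proof -
  obtain j k where jk: "u = (j, k)" "j < m" "k \<le> n"
    using u by (cases u) (auto simp: star_forest_V_def)
  have "D_nbhd (star_forest_V m n) (star_forest_A m n (\<lambda>k. k \<le> p)) {0, 1} u =
      (if k = 0 then insert (j, 0) (Pair j ` {1..p}) else if k \<le> p then {u} else {u, (j, 0)})"
    unfolding D_nbhd_01[OF u] using jk \<open>p \<le> n\<close>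
    by (auto simp: star_forest_V_def star_forest_A_iff)
  moreover have "(\<Sum>v \<in> insert (j, 0) (Pair j ` {1..p}). F v) = F (j, 0) + (\<Sum>l = 1..p. F (j, l))"
    by (simp add: sum.reindex image_iff inj_on_def)
  ultimately show ?thesis
    using jk by (simp add: D_weight_def star_weight_def)
qed

definition centres_first_labeling :: "nat \<Rightarrow> nat \<Rightarrow> nat \<times> nat \<Rightarrow> nat" where
  "centres_first_labeling m n = (\<lambda>(j, k). if k = 0 then 1 + j else m + j * n + k)"

lemma bij_betw_centres_first_labeling:
  "bij_betw (centres_first_labeling m n) ({..<m} \<times> {0..n}) {1..m * (n + 1)}"
proof -
  let ?F = "centres_first_labeling m n"
  have "bij_betw ?F ({..<m} \<times> {0..<0 + 1}) {1..<1 + m * 1}"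
    using bij_betw_mixed_radix[of 1 1 0 m]
    by (rule bij_betw_cong[THEN iffD1, rotated]) (auto simp: centres_first_labeling_def)
  moreover have "bij_betw ?F ({..<m} \<times> {1..<1 + n}) {1 + m..<1 + m + m * n}"
    using bij_betw_mixed_radix[of "1 + m" n 1 m]
    by (rule bij_betw_cong[THEN iffD1, rotated]) (auto simp: centres_first_labeling_def)
  ultimately have "bij_betw ?F ({..<m} \<times> {0..<0 + 1} \<union> {..<m} \<times> {1..<1 + n})
      ({1..<1 + m * 1} \<union> {1 + m..<1 + m + m * n})"
    by (rule bij_betw_combine) auto
  moreover have "{..<m} \<times> {0..<0 + 1} \<union> {..<m} \<times> {1..<1 + n} = {..<m} \<times> {0..n}"
    by auto
  moreover have "{1..<1 + m * 1} \<union> {1 + m..<1 + m + m * n} = {1..m * (n + 1)}"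
    by auto
  ultimately show ?thesis by simp
qed

lemma inj_on_star_weight_centres_first_labeling:
  "inj_on (star_weight 0 (centres_first_labeling m n)) ({..<m} \<times> {0..n})"
proof -
  let ?w = "star_weight 0 (centres_first_labeling m n)"
  have w_centre: "?w (j, 0) = 1 + j" for j
    by (simp add: star_weight_def centres_first_labeling_def)
  have w_leaf: "?w (j, k) = (m + 2) + j * (n + 1) + (k - 1)" if "k \<noteq> 0" for j k
    using that by (simp add: star_weight_def centres_first_labeling_def)
  have "inj_on ?w ({..<m} \<times> {0})"
    by (rule inj_on_mixed_radix[where c = 1 and b = 1 and a = 0]) (auto simp: w_centre)
  moreover have "inj_on ?w ({..<m} \<times> {1..n})"
    by (rule inj_on_mixed_radix[where c = "m + 2" and b = "n + 1" and a = 1]) (auto simp: w_leaf)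
  moreover have "?w x < ?w y" if "x \<in> {..<m} \<times> {0}" "y \<in> {..<m} \<times> {1..n}" for x y
    using that by (auto simp: w_centre w_leaf)
  ultimately have "inj_on ?w ({..<m} \<times> {0} \<union> {..<m} \<times> {1..n})"
    by (rule inj_on_Un_less)
  moreover have "{..<m} \<times> {0} \<union> {..<m} \<times> {1..n} = {..<m} \<times> {0..n}" by auto
  ultimately show ?thesis by simp
qed

definition leaves_centres_labeling :: "nat \<Rightarrow> nat \<Rightarrow> nat \<times> nat \<Rightarrow> nat" where
  "leaves_centres_labeling m n = (\<lambda>(j, k). if k = 0 then m * n + 1 + j else j * n + k)"

lemma bij_betw_leaves_centres_labeling:
  "bij_betw (leaves_centres_labeling m n) ({..<m} \<times> {0..n}) {1..m * (n + 1)}"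
proof -
  let ?F = "leaves_centres_labeling m n"
  have "bij_betw ?F ({..<m} \<times> {1..<1 + n}) {1..<1 + m * n}"
    using bij_betw_mixed_radix[of 1 n 1 m]
    by (rule bij_betw_cong[THEN iffD1, rotated]) (auto simp: leaves_centres_labeling_def)
  moreover have "bij_betw ?F ({..<m} \<times> {0..<0 + 1}) {1 + m * n..<1 + m * n + m * 1}"
    using bij_betw_mixed_radix[of "1 + m * n" 1 0 m]
    by (rule bij_betw_cong[THEN iffD1, rotated]) (auto simp: leaves_centres_labeling_def)
  ultimately have "bij_betw ?F ({..<m} \<times> {1..<1 + n} \<union> {..<m} \<times> {0..<0 + 1})
      ({1..<1 + m * n} \<union> {1 + m * n..<1 + m * n + m * 1})"
    by (rule bij_betw_combine) auto
  moreover have "{..<m} \<times> {1..<1 + n} \<union> {..<m} \<times> {0..<0 + 1} = {..<m} \<times> {0..n}"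
    by auto
  moreover have "{1..<1 + m * n} \<union> {1 + m * n..<1 + m * n + m * 1} = {1..m * (n + 1)}"
    by auto
  ultimately show ?thesis by simp
qed

lemma inj_on_star_weight_leaves_centres_labeling:
  assumes "1 \<le> n"
  shows "inj_on (star_weight 1 (leaves_centres_labeling m n)) ({..<m} \<times> {0..n})"
proof -
  let ?w = "star_weight 1 (leaves_centres_labeling m n)"
  let ?G = "\<lambda>(j, k). (m * n + 1) + j * (n + 1) + (k - 0)"
  \<comment> \<open>the centre of copy j takes the numeral slot of its out-leaf (j, 1)\<close>
  let ?\<kappa> = "\<lambda>(j, k). (j, if k = 0 then 1 else k)"
  have w_out: "?w (j, 1) = j * n + 1" for j
    by (simp add: star_weight_def leaves_centres_labeling_def)
  have w_other: "?w (j, k) = ?G (?\<kappa> (j, k))" if "k \<noteq> 1" for j k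
    using that by (simp add: star_weight_def leaves_centres_labeling_def)
  have "inj_on ?w ({..<m} \<times> {1})"
    by (rule inj_on_mixed_radix[where c = 1 and b = n and a = 1]) (use assms w_out in auto)
  moreover have "inj_on ?w ({..<m} \<times> ({0} \<union> {2..n}))"
  proof -
    have "inj_on ?\<kappa> ({..<m} \<times> ({0} \<union> {2..n}))" by (auto simp: inj_on_def)
    moreover have "inj_on ?G (?\<kappa> ` ({..<m} \<times> ({0} \<union> {2..n})))"
      by (rule inj_on_mixed_radix[where b = "n + 1" and a = 0 and m = m]) (use assms in auto)
    ultimately have "inj_on (?G \<circ> ?\<kappa>) ({..<m} \<times> ({0} \<union> {2..n}))" by (rule comp_inj_on)
    moreover have "(?G \<circ> ?\<kappa>) x = ?w x" if "x \<in> {..<m} \<times> ({0} \<union> {2..n})" for x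
      using that w_other by auto
    ultimately show ?thesis using inj_on_cong by blast
  qed
  moreover have "?w x < ?w y"
    if x: "x \<in> {..<m} \<times> {1}" and y: "y \<in> {..<m} \<times> ({0} \<union> {2..n})" for x y
  proof -
    obtain j where "x = (j, 1)" "j < m" using x by blast
    then have "?w x \<le> m * n"
      using w_out mult_le_mono1[of "j + 1" m n] assms by auto
    moreover have "m * n < ?w y" using y w_other by auto
    ultimately show ?thesis by simp
  qed
  ultimately have "inj_on ?w ({..<m} \<times> {1} \<union> {..<m} \<times> ({0} \<union> {2..n}))"
    by (rule inj_on_Un_less)
  moreover have "{..<m} \<times> {1} \<union> {..<m} \<times> ({0} \<union> {2..n}) = {..<m} \<times> {0..n}"
    using assms by auto
  ultimately show ?thesis by simp
qed

definition ins_outs_centres_labeling :: "nat \<Rightarrow> nat \<Rightarrow> nat \<Rightarrow> nat \<times> nat \<Rightarrow> nat" where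
  "ins_outs_centres_labeling m n p = (\<lambda>(j, k). if k = 0 then m * n + 1 + j
     else if k \<le> p then m * (n - p) + j * p + k else j * (n - p) + (k - p))"

lemma bij_betw_ins_outs_centres_labeling:
  assumes "p \<le> n"
  shows "bij_betw (ins_outs_centres_labeling m n p) ({..<m} \<times> {0..n}) {1..m * (n + 1)}"
proof -
  let ?F = "ins_outs_centres_labeling m n p"
  define q where "q = n - p"
  have mn: "m * q + m * p = m * n" using assms by (simp add: q_def flip: distrib_left)
  have "bij_betw ?F ({..<m} \<times> {1 + p..<1 + p + q}) {1..<1 + m * q}"
    using bij_betw_mixed_radix[of 1 q "1 + p" m]
    by (rule bij_betw_cong[THEN iffD1, rotated]) (auto simp: ins_outs_centres_labeling_def q_def)
  moreover have "bij_betw ?F ({..<m} \<times> {1..<1 + p}) {1 + m * q..<1 + m * q + m * p}"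
    using bij_betw_mixed_radix[of "1 + m * q" p 1 m]
    by (rule bij_betw_cong[THEN iffD1, rotated]) (auto simp: ins_outs_centres_labeling_def q_def)
  moreover have "bij_betw ?F ({..<m} \<times> {0..<0 + 1}) {1 + m * n..<1 + m * n + m * 1}"
    using bij_betw_mixed_radix[of "1 + m * n" 1 0 m]
    by (rule bij_betw_cong[THEN iffD1, rotated]) (auto simp: ins_outs_centres_labeling_def)
  ultimately have "bij_betw ?F
      ({..<m} \<times> {1 + p..<1 + p + q} \<union> {..<m} \<times> {1..<1 + p} \<union> {..<m} \<times> {0..<0 + 1})
      ({1..<1 + m * q} \<union> {1 + m * q..<1 + m * q + m * p} \<union> {1 + m * n..<1 + m * n + m * 1})"
    using mn by (intro bij_betw_combine) auto
  moreover have "{..<m} \<times> {1 + p..<1 + p + q} \<union> {..<m} \<times> {1..<1 + p} \<union> {..<m} \<times> {0..<0 + 1}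
      = {..<m} \<times> {0..n}"
    using assms by (auto simp: q_def)
  moreover have "{1..<1 + m * q} \<union> {1 + m * q..<1 + m * q + m * p} \<union> {1 + m * n..<1 + m * n + m * 1}
      = {1..m * (n + 1)}"
    using mn by auto
  ultimately show ?thesis by simp
qed

lemma centre_weights_ins_outs_centres_labeling:
  assumes "2 \<le> p"
  shows "strict_mono (\<lambda>j. star_weight p (ins_outs_centres_labeling m n p) (j, 0))"
    and "m * n + 1 + 2 * (m * (n - p) + 1) \<le> star_weight p (ins_outs_centres_labeling m n p) (j, 0)"
proof -
  define q where "q = n - p"
  have w: "star_weight p (ins_outs_centres_labeling m n p) (j, 0) =
      m * n + 1 + j + (\<Sum>l = 1..p. m * q + j * p + l)" for j
    by (simp add: star_weight_def ins_outs_centres_labeling_def q_def)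
  show "strict_mono (\<lambda>j. star_weight p (ins_outs_centres_labeling m n p) (j, 0))"
  proof (rule strict_monoI)
    fix j j' :: nat assume "j < j'"
    then have "(\<Sum>l = 1..p. m * q + j * p + l) \<le> (\<Sum>l = 1..p. m * q + j' * p + l)"
      by (intro sum_mono) simp
    with \<open>j < j'\<close> show "star_weight p (ins_outs_centres_labeling m n p) (j, 0)
        < star_weight p (ins_outs_centres_labeling m n p) (j', 0)"
      by (simp add: w)
  qed
  have "2 * (m * q + 1) \<le> p * (m * q + 1)" using assms by (rule mult_le_mono1)
  also have "\<dots> = (\<Sum>l = 1..p. m * q + 1)" by simp
  also have "\<dots> \<le> (\<Sum>l = 1..p. m * q + j * p + l)" by (intro sum_mono) simp
  finally show "m * n + 1 + 2 * (m * (n - p) + 1)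
      \<le> star_weight p (ins_outs_centres_labeling m n p) (j, 0)"
    by (simp add: w q_def)
qed

lemma inj_on_star_weight_ins_outs_centres_labeling:
  assumes "2 \<le> p" "p \<le> n"
  shows "inj_on (star_weight p (ins_outs_centres_labeling m n p)) ({..<m} \<times> {0..n})"
proof -
  let ?w = "star_weight p (ins_outs_centres_labeling m n p)"
  define q where "q = n - p"
  have w_out: "?w (j, k) = (1 + m * q) + j * p + (k - 1)" if "k \<in> {1..p}" for j k
    using that by (simp add: star_weight_def ins_outs_centres_labeling_def q_def)
  have w_in: "?w (j, k) = (m * n + 2) + j * (q + 1) + (k - (1 + p))" if "k \<in> {p<..n}" for j k
    using that by (simp add: star_weight_def ins_outs_centres_labeling_def q_def; arith)
  have inj_centres: "inj_on ?w ({..<m} \<times> {0})"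
    using strict_mono_eq[OF centre_weights_ins_outs_centres_labeling(1)[OF assms(1)]]
    by (auto simp: inj_on_def)
  have inj_ins: "inj_on ?w ({..<m} \<times> {p<..n})"
    by (rule inj_on_mixed_radix[where c = "m * n + 2" and b = "q + 1" and a = "1 + p"])
      (auto simp: w_in q_def)
  have inj_outs: "inj_on ?w ({..<m} \<times> {1..p})"
    by (rule inj_on_mixed_radix[where c = "1 + m * q" and b = p and a = 1]) (auto simp: w_out)
  have ins_less_centres: "?w x < ?w y"
    if x: "x \<in> {..<m} \<times> {p<..n}" and y: "y \<in> {..<m} \<times> {0}" for x y
  proof -
    obtain j k where "x = (j, k)" "j < m" "p < k" "k \<le> n" using x by auto
    have "k - (1 + p) < q + 1" using \<open>k \<le> n\<close> unfolding q_def by arith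
    then have "j * (q + 1) + (k - (1 + p)) < (j + 1) * (q + 1)" by simp
    also have "\<dots> \<le> m * (q + 1)" using \<open>j < m\<close> by (intro mult_le_mono1) simp
    finally have in_bound: "?w x < m * n + 2 + m * q + m"
      using w_in \<open>x = (j, k)\<close> \<open>p < k\<close> \<open>k \<le> n\<close> by simp
    have "1 \<le> q" using \<open>p < k\<close> \<open>k \<le> n\<close> by (simp add: q_def)
    then have "m \<le> m * q" by simp
    obtain j' where y': "y = (j', 0)" using y by auto
    have "m * n + 1 + 2 * (m * q + 1) \<le> ?w (j', 0)"
      using centre_weights_ins_outs_centres_labeling(2)[OF assms(1)] by (simp add: q_def)
    with in_bound \<open>m \<le> m * q\<close> show ?thesis unfolding y' by arith
  qed
  have outs_less: "?w x < ?w y"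
    if x: "x \<in> {..<m} \<times> {1..p}" and y: "y \<in> {..<m} \<times> {p<..n} \<union> {..<m} \<times> {0}" for x y
  proof -
    obtain j k where "x = (j, k)" "j < m" "k \<in> {1..p}" using x by auto
    then have "?w x \<le> m * q + m * p"
      using w_out mult_le_mono1[of "j + 1" m p] by auto
    also have "\<dots> = m * n" using assms(2) by (simp add: q_def flip: distrib_left)
    also have "m * n < ?w y"
      using y w_in by (auto simp: star_weight_def ins_outs_centres_labeling_def)
    finally show ?thesis .
  qed
  have "inj_on ?w ({..<m} \<times> {1..p} \<union> ({..<m} \<times> {p<..n} \<union> {..<m} \<times> {0}))"
    using inj_outs inj_on_Un_less[OF inj_ins inj_centres ins_less_centres] outs_less
    by (rule inj_on_Un_less)
  moreover have "{..<m} \<times> {1..p} \<union> ({..<m} \<times> {p<..n} \<union> {..<m} \<times> {0}) = {..<m} \<times> {0..n}"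
    using assms by auto
  ultimately show ?thesis by simp
qed

lemma ex_antimagic_star_labeling:
  assumes "1 \<le> n" "p \<le> n"
  obtains F where "bij_betw F ({..<m} \<times> {0..n}) {1..m * (n + 1)}"
    and "inj_on (star_weight p F) ({..<m} \<times> {0..n})"
proof -
  consider "p = 0" | "p = 1" | "2 \<le> p" by linarith
  then show thesis
  proof cases
    case 1
    then show thesis
      using that bij_betw_centres_first_labeling inj_on_star_weight_centres_first_labeling
      by blast
  next
    case 2
    then show thesis
      using that bij_betw_leaves_centres_labeling
        inj_on_star_weight_leaves_centres_labeling[OF assms(1)]
      by blast
  next
    case 3
    then show thesis
      using that bij_betw_ins_outs_centres_labeling[OF assms(2)]
        inj_on_star_weight_ins_outs_centres_labeling[OF 3 assms(2)]
      by blast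
  qed
qed

lemma D_antimagic_01_star_forest_sorted:
  assumes "1 \<le> m" "1 \<le> n" "p \<le> n"
  shows "D_antimagic (star_forest_V m n) (star_forest_A m n (\<lambda>k. k \<le> p)) {0, 1}"
proof -
  let ?V = "star_forest_V m n" and ?A = "star_forest_A m n (\<lambda>k. k \<le> p)"
  have V: "?V = {..<m} \<times> {0..n}" by (simp add: star_forest_V_def)
  obtain F where F: "bij_betw F ({..<m} \<times> {0..n}) {1..m * (n + 1)}"
    and w: "inj_on (star_weight p F) ({..<m} \<times> {0..n})"
    using ex_antimagic_star_labeling[OF assms(2,3)] .
  have "bij_betw F ?V {1..card ?V}" using F by (simp add: V card_cartesian_product)
  moreover have "inj_on (D_weight ?V ?A {0, 1} F) ?V \<longleftrightarrow> inj_on (star_weight p F) ?V"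
    by (rule inj_on_cong) (rule D_weight_star_forest_sorted[OF assms(3)])
  then have "inj_on (D_weight ?V ?A {0, 1} F) ?V" using w by (simp only: V)
  moreover have "1 \<le> odiam ?V ?A"
  proof -
    have "(0, 0) \<in> ?V" "(0, 1) \<in> ?V" using assms by (auto simp: star_forest_V_def)
    moreover have "((0, 0), (0, 1)) \<in> ?A \<or> ((0, 1), (0, 0)) \<in> ?A"
      using assms by (auto simp: star_forest_A_iff)
    ultimately show ?thesis using odiam_ge_1[OF finite_star_forest_V] by fastforce
  qed
  ultimately show ?thesis unfolding D_antimagic_def by auto
qed

theorem mainTheorem7:
  fixes m n :: nat and ori :: "nat \<Rightarrow> bool"
  assumes "m \<ge> 2" and "n \<ge> 1"
  shows "D_antimagic (star_forest_V m n) (star_forest_A m n ori) {0} \<and>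
         D_antimagic (star_forest_V m n) (star_forest_A m n ori) {0, 1}"
proof
  let ?V = "star_forest_V m n" and ?p = "card {i \<in> {1..n}. ori i}"
  show "D_antimagic ?V (star_forest_A m n ori) {0}"
    by (rule D_antimagic_0[OF finite_star_forest_V])
  obtain h where iso:
    "digraph_iso h ?V (star_forest_A m n ori) ?V (star_forest_A m n (\<lambda>k. k \<le> ?p))"
    by (rule star_forest_sorted_iso)
  have "?p \<le> card {1..n}" by (rule card_mono) auto
  then have "D_antimagic ?V (star_forest_A m n (\<lambda>k. k \<le> ?p)) {0, 1}"
    using assms by (intro D_antimagic_01_star_forest_sorted) auto
  with iso show "D_antimagic ?V (star_forest_A m n ori) {0, 1}"
    by (rule D_antimagic_digraph_iso)
qed

end
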